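(* Let $G=(V,E)$ be a connected undirected unweighted graph in which every node has a self-loop, and let $k\le|V|$ be a positive integer. Let $S^*\in\arg\max_{S\subseteq V,|S|=k}\operatorname{fp}^{\infty}(G^S)$. Let $S'=S'_k$, where $S'_0=\emptyset$ and, for $i=1,\dots,k$, $S'_i=S'_{i-1}\cup\{v_i\}$ with $v_i\in\arg\max_{v\in V\setminus S'_{i-1}}\operatorname{fp}^{\infty}(G^{S'_{i-1}\cup\{v\}})$. Then $\operatorname{fp}^{\infty}(G^{S'})\ge\left(1-\frac1e\right)\operatorname{fp}^{\infty}(G^{S^*})$.
   Context: Positional Voter model. A graph $G=(V,E,w)$ has node set $V$ with $|V|=n$, edge set $E\subseteq V\times V$ and weights $w\colon E\to\mathbb{R}_{>0}$; $\operatorname{in}(u)=\{v\in V:(v,u)\in E\}$. "Undirected unweighted" means $E$ is symmetric and $w\equiv 1$; "self-loop at $u$" means $(u,u)\in E$. A configuration is a set $X\subseteq V$ (the nodes carrying the novel trait $A$). Given a biased set $S\subseteq V$ and bias $\delta\ge 0$, define $f^S_X(v\mid u)=1+\delta$ if $v\in X$ and $u\in S$, and $1$ otherwise. The process $(\mathcal{X}_t)_{t\ge0}$: given $\mathcal{X}_t=X$, a node $u$ is chosen uniformly at random from $V$, then $v\in\operatorname{in}(u)$ is chosen with probability $\frac{f^S_X(v\mid u)\,w(v,u)}{\sum_{x\in\operatorname{in}(u)} f^S_X(x\mid u)\,w(x,u)}$, and $\mathcal{X}_{t+1}=X\cup\{u\}$ if $v\in X$, $\mathcal{X}_{t+1}=X\setminus\{u\}$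 otherwise. Define $\operatorname{fp}(G^S,\delta,X)=\mathbb{P}[\exists t\ge0:\mathcal{X}_t=V\mid\mathcal{X}_0=X]$, $\operatorname{fp}(G^S,\delta)=\frac1n\sum_{u\in V}\operatorname{fp}(G^S,\delta,\{u\})$, and $\operatorname{fp}^{\infty}(G^S)=\lim_{\delta\to\infty}\operatorname{fp}(G^S,\delta)$. *)

theory Defs
  imports "HOL-Analysis.Analysis"
begin

text \<open>Positional Voter model on a weighted graph with node set V, edge set E
  and weight function w.  A configuration is a set X of nodes carrying trait A.\<close>

definition in_nbrs :: "('v \<times> 'v) set \<Rightarrow> 'v set \<Rightarrow> 'v \<Rightarrow> 'v set" where
  "in_nbrs E V u = {v \<in> V. (v, u) \<in> E}"

definition fitness :: "'v set \<Rightarrow> real \<Rightarrow> 'v set \<Rightarrow> 'v \<Rightarrow> 'v \<Rightarrow> real" where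
  "fitness S \<delta> X v u = (if v \<in> X \<and> u \<in> S then 1 + \<delta> else 1)"

definition copyA_prob ::
  "'v set \<Rightarrow> ('v \<times> 'v) set \<Rightarrow> ('v \<Rightarrow> 'v \<Rightarrow> real) \<Rightarrow> 'v set \<Rightarrow> real \<Rightarrow> 'v set \<Rightarrow> 'v \<Rightarrow> real" where
  "copyA_prob V E w S \<delta> X u =
     (\<Sum>v\<in>in_nbrs E V u \<inter> X. fitness S \<delta> X v u * w v u) /
     (\<Sum>x\<in>in_nbrs E V u. fitness S \<delta> X x u * w x u)"

text \<open>reach_within t X = P[\<exists>s \<le> t. X_s = V | X_0 = X]  (first-step recursion).\<close>
fun reach_within ::
  "'v set \<Rightarrow> ('v \<times> 'v) set \<Rightarrow> ('v \<Rightarrow> 'v \<Rightarrow> real) \<Rightarrow> 'v set \<Rightarrow> real \<Rightarrow> nat \<Rightarrow> 'v set \<Rightarrow> real" where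
  "reach_within V E w S \<delta> 0 X = (if X = V then 1 else 0)"
| "reach_within V E w S \<delta> (Suc t) X =
     (if X = V then 1 else
      (1 / real (card V)) * (\<Sum>u\<in>V.
          copyA_prob V E w S \<delta> X u * reach_within V E w S \<delta> t (X \<union> {u})
        + (1 - copyA_prob V E w S \<delta> X u) * reach_within V E w S \<delta> t (X - {u})))"

text \<open>fp(G^S, \<delta>, X) = P[\<exists>t. X_t = V | X_0 = X], the increasing limit of
  the probabilities of hitting V within t steps.\<close>
definition fp_from ::
  "'v set \<Rightarrow> ('v \<times> 'v) set \<Rightarrow> ('v \<Rightarrow> 'v \<Rightarrow> real) \<Rightarrow> 'v set \<Rightarrow> real \<Rightarrow> 'v set \<Rightarrow> real" where
  "fp_from V E w S \<delta> X = (SUP t. reach_within V E w S \<delta> t X)"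

definition fp ::
  "'v set \<Rightarrow> ('v \<times> 'v) set \<Rightarrow> ('v \<Rightarrow> 'v \<Rightarrow> real) \<Rightarrow> 'v set \<Rightarrow> real \<Rightarrow> real" where
  "fp V E w S \<delta> = (1 / real (card V)) * (\<Sum>u\<in>V. fp_from V E w S \<delta> {u})"

definition fp_inf ::
  "'v set \<Rightarrow> ('v \<times> 'v) set \<Rightarrow> ('v \<Rightarrow> 'v \<Rightarrow> real) \<Rightarrow> 'v set \<Rightarrow> real" where
  "fp_inf V E w S = Lim at_top (\<lambda>\<delta>. fp V E w S \<delta>)"

end

theory Submission
  imports Defs
begin

text \<open>
  As \<open>\<delta> \<rightarrow> \<infinity>\<close>, a biased node copies trait \<open>A\<close> as soon as one of its in-neighbours carries
  it; every other update stays neutral. The limit of the fixation probabilities is the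
  fixation probability of the chain with these limiting copy probabilities: the biased chain is
  dominated by the limiting one, which is monotone in the configuration, and each finite-horizon
  probability is continuous in the copy probabilities.

  In the limiting chain a biased \<open>A\<close>-node never loses \<open>A\<close> (it is its own in-neighbour), so
  once the configuration meets \<open>S\<close> fixation is certain by a minimum principle on the
  connected graph. Hence \<open>fp\<^sup>\<infinity>(S)\<close> is the probability of ever meeting \<open>S\<close>. Until then
  the chain is the neutral voter model, and along a fixed sequence of neutral updates \<open>S\<close>
  is met iff some \<open>{s}\<close>, \<open>s \<in> S\<close>, is met. So \<open>fp\<^sup>\<infinity>\<close> is a limit of nonnegative combinations
  of coverage indicators, and therefore satisfies
  \<open>f T \<le> f A + (\<Sum>s\<in>T - A. f (A \<union> {s}) - f A)\<close>, the only property of monotone submodular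
  functions that the classical greedy \<open>1 - 1/e\<close> argument uses.
\<close>

section \<open>Set-valued copying chains\<close>

definition expect_step ::
  "'v set \<Rightarrow> ('v set \<Rightarrow> 'v \<Rightarrow> real) \<Rightarrow> ('v set \<Rightarrow> real) \<Rightarrow> 'v set \<Rightarrow> real" where
  "expect_step V p h X =
     (1 / real (card V)) * (\<Sum>u\<in>V. p X u * h (X \<union> {u}) + (1 - p X u) * h (X - {u}))"

lemma expect_step_cong:
  assumes "\<And>Y. Y \<subseteq> V \<Longrightarrow> h Y = h' Y" "X \<subseteq> V"
  shows "expect_step V p h X = expect_step V p h' X"
proof -
  have "h (X \<union> {u}) = h' (X \<union> {u})" "h (X - {u}) = h' (X - {u})" if "u \<in> V" for u
    using that assms(2) by (intro assms(1); auto)+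
  then show ?thesis unfolding expect_step_def by (intro arg_cong[where f = "(*) _"] sum.cong) auto
qed

fun absorb_within ::
  "('v set \<Rightarrow> bool) \<Rightarrow> 'v set \<Rightarrow> ('v set \<Rightarrow> 'v \<Rightarrow> real) \<Rightarrow> nat \<Rightarrow> 'v set \<Rightarrow> real" where
  "absorb_within D V p 0 X = (if D X then 1 else 0)"
| "absorb_within D V p (Suc t) X =
     (if D X then 1 else expect_step V p (absorb_within D V p t) X)"

definition absorb_prob ::
  "('v set \<Rightarrow> bool) \<Rightarrow> 'v set \<Rightarrow> ('v set \<Rightarrow> 'v \<Rightarrow> real) \<Rightarrow> 'v set \<Rightarrow> real" where
  "absorb_prob D V p X = (SUP t. absorb_within D V p t X)"

lemma absorb_within_target: "D X \<Longrightarrow> absorb_within D V p t X = 1"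
  by (cases t) auto

lemma absorb_prob_target: "D X \<Longrightarrow> absorb_prob D V p X = 1"
  by (simp add: absorb_prob_def absorb_within_target)

lemma tendsto_absorb_within:
  assumes "\<And>X u. ((\<lambda>x. p x X u) \<longlongrightarrow> q X u) F"
  shows "((\<lambda>x. absorb_within D V (p x) t X) \<longlongrightarrow> absorb_within D V q t X) F"
proof (induction t arbitrary: X)
  case (Suc t)
  show ?case
  proof (cases "D X")
    case False
    then show ?thesis
      unfolding absorb_within.simps expect_step_def
      by (simp only: if_False) (intro tendsto_intros assms Suc.IH)
  qed simp
qed simp

lemma convex_comb_mono:
  fixes p q a a' b b' :: real
  assumes "0 \<le> p" "p \<le> q" "q \<le> 1" "a \<le> a'" "b \<le> b'" "b' \<le> a'"
  shows "p * a + (1 - p) * b \<le> q * a' + (1 - q) * b'"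
proof -
  have "p * a + (1 - p) * b \<le> p * a' + (1 - p) * b'"
    using assms by (intro add_mono mult_left_mono) auto
  also have "\<dots> = b' + p * (a' - b')" by (simp add: algebra_simps)
  also have "\<dots> \<le> b' + q * (a' - b')" using assms by (intro add_left_mono mult_right_mono) auto
  also have "\<dots> = q * a' + (1 - q) * b'" by (simp add: algebra_simps)
  finally show ?thesis .
qed

locale copy_chain =
  fixes V :: "'v set" and p :: "'v set \<Rightarrow> 'v \<Rightarrow> real"
  assumes finite_V: "finite V" and V_nonempty: "V \<noteq> {}"
    and p_nonneg: "\<And>X u. X \<subseteq> V \<Longrightarrow> u \<in> V \<Longrightarrow> 0 \<le> p X u"
    and p_le_1: "\<And>X u. X \<subseteq> V \<Longrightarrow> u \<in> V \<Longrightarrow> p X u \<le> 1"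
begin

lemma card_V_pos: "0 < real (card V)"
  using finite_V V_nonempty by (simp add: card_gt_0_iff)

lemma expect_step_mono:
  assumes "\<And>Y. Y \<subseteq> V \<Longrightarrow> h Y \<le> h' Y" "X \<subseteq> V"
  shows "expect_step V p h X \<le> expect_step V p h' X"
  unfolding expect_step_def using assms(2) p_nonneg p_le_1
  by (intro mult_left_mono sum_mono add_mono) (auto intro!: assms(1))

lemma expect_step_le_const:
  assumes "\<And>Y. Y \<subseteq> V \<Longrightarrow> h Y \<le> c" "X \<subseteq> V"
  shows "expect_step V p h X \<le> c"
proof -
  have "expect_step V p h X \<le> expect_step V p (\<lambda>_. c) X"
    using assms by (intro expect_step_mono) auto
  also have "\<dots> = c" using card_V_pos by (simp add: expect_step_def algebra_simps)
  finally show ?thesis .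
qed

lemma expect_step_ge_const:
  assumes "\<And>Y. Y \<subseteq> V \<Longrightarrow> c \<le> h Y" "X \<subseteq> V"
  shows "c \<le> expect_step V p h X"
proof -
  have "c = expect_step V p (\<lambda>_. c) X" using card_V_pos by (simp add: expect_step_def algebra_simps)
  also have "\<dots> \<le> expect_step V p h X"
    using assms by (intro expect_step_mono) auto
  finally show ?thesis .
qed

lemma expect_step_mono_coupled:
  assumes "copy_chain V q" "X \<subseteq> Y" "Y \<subseteq> V"
    and pq: "\<And>u. u \<in> V \<Longrightarrow> p X u \<le> q Y u"
    and hh': "\<And>Z Z'. Z \<subseteq> Z' \<Longrightarrow> Z' \<subseteq> V \<Longrightarrow> h Z \<le> h' Z'"
    and h'_mono: "\<And>Z Z'. Z \<subseteq> Z' \<Longrightarrow> Z' \<subseteq> V \<Longrightarrow> h' Z \<le> h' Z'"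
  shows "expect_step V p h X \<le> expect_step V q h' Y"
  unfolding expect_step_def
proof (intro mult_left_mono sum_mono convex_comb_mono)
  fix u assume u: "u \<in> V"
  show "0 \<le> p X u" "p X u \<le> q Y u" "q Y u \<le> 1"
    using u assms p_nonneg copy_chain.p_le_1 by auto
  show "h (X \<union> {u}) \<le> h' (Y \<union> {u})" "h (X - {u}) \<le> h' (Y - {u})"
    "h' (Y - {u}) \<le> h' (Y \<union> {u})"
    using u assms by (auto intro!: hh' h'_mono)
qed simp

lemma absorb_within_bounds:
  "X \<subseteq> V \<Longrightarrow> 0 \<le> absorb_within D V p t X \<and> absorb_within D V p t X \<le> 1"
proof (induction t arbitrary: X)
  case (Suc t)
  have "\<And>Y. Y \<subseteq> V \<Longrightarrow> 0 \<le> absorb_within D V p t Y"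
    "\<And>Y. Y \<subseteq> V \<Longrightarrow> absorb_within D V p t Y \<le> 1"
    using Suc.IH by auto
  then show ?case
    using Suc.prems
    by (auto intro: expect_step_le_const[where h="absorb_within D V p t"]
        expect_step_ge_const[where h="absorb_within D V p t"])
qed simp

lemma absorb_within_Suc_ge:
  "X \<subseteq> V \<Longrightarrow> absorb_within D V p t X \<le> absorb_within D V p (Suc t) X"
proof (induction t arbitrary: X)
  case 0
  then show ?case
    using absorb_within_bounds[OF "0", of D "Suc 0"]
    by (cases "D X") (simp_all del: absorb_within.simps(2) add: absorb_within_target)
next
  case (Suc t)
  then show ?case
    by (simp del: absorb_within.simps(2) add: absorb_within.simps(2)[of D V p "Suc t"]
        absorb_within.simps(2)[of D V p t] expect_step_mono)
qed

lemma absorb_within_mono_target: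
  assumes "\<And>X. X \<subseteq> V \<Longrightarrow> D1 X \<Longrightarrow> D2 X"
  shows "X \<subseteq> V \<Longrightarrow> absorb_within D1 V p t X \<le> absorb_within D2 V p t X"
proof (induction t arbitrary: X)
  case (Suc t)
  then show ?case
    using assms absorb_within_bounds[of X D1 "Suc t"] by (auto intro: expect_step_mono)
qed (use assms in auto)

lemma absorb_within_mono_config:
  assumes p_mono: "\<And>X Y u. X \<subseteq> Y \<Longrightarrow> Y \<subseteq> V \<Longrightarrow> u \<in> V \<Longrightarrow> p X u \<le> p Y u"
    and D_mono: "\<And>X Y. X \<subseteq> Y \<Longrightarrow> Y \<subseteq> V \<Longrightarrow> D X \<Longrightarrow> D Y"
  shows "X \<subseteq> Y \<Longrightarrow> Y \<subseteq> V \<Longrightarrow> absorb_within D V p t X \<le> absorb_within D V p t Y"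
proof (induction t arbitrary: X Y)
  case (Suc t)
  show ?case
  proof (cases "D Y")
    case True
    then show ?thesis using absorb_within_bounds[of X D "Suc t"] Suc.prems by auto
  next
    case False
    then have "\<not> D X" using D_mono Suc.prems by auto
    have "expect_step V p (absorb_within D V p t) X \<le> expect_step V p (absorb_within D V p t) Y"
      by (rule expect_step_mono_coupled) (use Suc p_mono copy_chain_axioms in auto)
    with False \<open>\<not> D X\<close> show ?thesis by simp
  qed
qed (use D_mono in auto)

lemma absorb_within_le_dominating:
  assumes "copy_chain V q"
    and pq: "\<And>X u. X \<subseteq> V \<Longrightarrow> u \<in> V \<Longrightarrow> p X u \<le> q X u"
    and q_attractive: "\<And>t X Y. X \<subseteq> Y \<Longrightarrow> Y \<subseteq> V \<Longrightarrow> absorb_within D V q t X \<le> absorb_within D V q t Y"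
  shows "X \<subseteq> V \<Longrightarrow> absorb_within D V p t X \<le> absorb_within D V q t X"
proof (induction t arbitrary: X)
  case (Suc t)
  have "expect_step V p (absorb_within D V p t) X \<le> expect_step V q (absorb_within D V q t) X"
  proof (rule expect_step_mono_coupled)
    show "absorb_within D V p t Z \<le> absorb_within D V q t Z'" if "Z \<subseteq> Z'" "Z' \<subseteq> V" for Z Z'
    proof -
      have "Z \<subseteq> V" using that by auto
      then show ?thesis using Suc.IH[of Z] q_attractive[OF that, of t] by linarith
    qed
  qed (use assms Suc.prems in auto)
  then show ?case by simp
qed simp

lemma absorb_within_le_superharmonic:
  assumes h_nonneg: "\<And>X. X \<subseteq> V \<Longrightarrow> 0 \<le> h X"
    and h_target: "\<And>X. X \<subseteq> V \<Longrightarrow> D X \<Longrightarrow> 1 \<le> h X"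
    and h_super: "\<And>X. X \<subseteq> V \<Longrightarrow> \<not> D X \<Longrightarrow> expect_step V p h X \<le> h X"
  shows "X \<subseteq> V \<Longrightarrow> absorb_within D V p t X \<le> h X"
proof (induction t arbitrary: X)
  case (Suc t)
  show ?case
  proof (cases "D X")
    case False
    have "expect_step V p (absorb_within D V p t) X \<le> expect_step V p h X"
      using Suc by (intro expect_step_mono) auto
    with False h_super[OF Suc.prems False] show ?thesis by simp
  qed (use h_target Suc.prems in simp)
qed (use h_nonneg h_target in simp)

lemma absorb_within_LIMSEQ:
  "X \<subseteq> V \<Longrightarrow> (\<lambda>t. absorb_within D V p t X) \<longlonglongrightarrow> absorb_prob D V p X"
  unfolding absorb_prob_def
  by (rule LIMSEQ_incseq_SUP)
     (auto intro!: bdd_aboveI2[where M=1] incseq_SucI absorb_within_Suc_ge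
       dest: absorb_within_bounds)

lemma absorb_within_le_absorb_prob:
  "X \<subseteq> V \<Longrightarrow> absorb_within D V p t X \<le> absorb_prob D V p X"
  unfolding absorb_prob_def
  by (rule cSUP_upper) (auto intro!: bdd_aboveI2[where M=1] dest: absorb_within_bounds)

lemma absorb_prob_le:
  "(\<And>t. absorb_within D V p t X \<le> c) \<Longrightarrow> absorb_prob D V p X \<le> c"
  unfolding absorb_prob_def by (rule cSUP_least) auto

lemma absorb_prob_bounds:
  assumes "X \<subseteq> V"
  shows "0 \<le> absorb_prob D V p X \<and> absorb_prob D V p X \<le> 1"
proof
  show "0 \<le> absorb_prob D V p X"
    using absorb_within_le_absorb_prob[OF assms, of D 0] absorb_within_bounds[OF assms, of D 0]
    by linarith
  show "absorb_prob D V p X \<le> 1"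
    using absorb_within_bounds[OF assms] by (blast intro: absorb_prob_le)
qed

lemma absorb_prob_harmonic:
  assumes "X \<subseteq> V" "\<not> D X"
  shows "absorb_prob D V p X = expect_step V p (absorb_prob D V p) X"
proof -
  have "(\<lambda>t. absorb_within D V p (Suc t) X) \<longlonglongrightarrow> expect_step V p (absorb_prob D V p) X"
    using assms(2) unfolding absorb_within.simps expect_step_def
    by (simp, intro tendsto_intros absorb_within_LIMSEQ) (use assms(1) card_V_pos in auto)
  moreover have "(\<lambda>t. absorb_within D V p (Suc t) X) \<longlonglongrightarrow> absorb_prob D V p X"
    using absorb_within_LIMSEQ[OF assms(1)] by (rule LIMSEQ_Suc)
  ultimately show ?thesis using LIMSEQ_unique by blast
qed

lemma absorb_prob_le_dominating:
  assumes "copy_chain V q"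
    and "\<And>X u. X \<subseteq> V \<Longrightarrow> u \<in> V \<Longrightarrow> p X u \<le> q X u"
    and "\<And>t X Y. X \<subseteq> Y \<Longrightarrow> Y \<subseteq> V \<Longrightarrow> absorb_within D V q t X \<le> absorb_within D V q t Y"
    and "X \<subseteq> V"
  shows "absorb_prob D V p X \<le> absorb_prob D V q X"
proof (rule absorb_prob_le)
  fix t
  show "absorb_within D V p t X \<le> absorb_prob D V q X"
    using absorb_within_le_dominating[OF assms, where t=t]
      copy_chain.absorb_within_le_absorb_prob[OF assms(1,4), of D t] by linarith
qed

lemma absorb_prob_eq_if_absorbing:
  assumes D1_D2: "\<And>X. X \<subseteq> V \<Longrightarrow> D1 X \<Longrightarrow> D2 X"
    and absorbing: "\<And>X. X \<subseteq> V \<Longrightarrow> D2 X \<Longrightarrow> absorb_prob D1 V p X = 1"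
    and "X \<subseteq> V"
  shows "absorb_prob D2 V p X = absorb_prob D1 V p X"
proof (rule antisym)
  have "absorb_within D2 V p t X \<le> absorb_prob D1 V p X" for t
  proof (rule absorb_within_le_superharmonic[OF _ _ _ \<open>X \<subseteq> V\<close>])
    show "expect_step V p (absorb_prob D1 V p) Y \<le> absorb_prob D1 V p Y"
      if "Y \<subseteq> V" "\<not> D2 Y" for Y
    proof -
      have "\<not> D1 Y" using D1_D2 that by blast
      from absorb_prob_harmonic[of Y D1, OF that(1) this] show ?thesis by linarith
    qed
  qed (use absorbing absorb_prob_bounds in auto)
  then show "absorb_prob D2 V p X \<le> absorb_prob D1 V p X"
    by (rule absorb_prob_le)
  show "absorb_prob D1 V p X \<le> absorb_prob D2 V p X"
  proof (rule absorb_prob_le)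
    fix t
    show "absorb_within D1 V p t X \<le> absorb_prob D2 V p X"
      using absorb_within_mono_target[of D1 D2, OF D1_D2 \<open>X \<subseteq> V\<close>, where t=t]
        absorb_within_le_absorb_prob[OF \<open>X \<subseteq> V\<close>, of D2 t] by linarith
  qed
qed

text \<open>Minimum principle for the harmonic function \<open>absorb_prob\<close>.\<close>
lemma absorb_prob_min_spreads:
  assumes "Z \<subseteq> V" "\<not> D Z"
    and Z_min: "\<And>W. W \<in> Y \<Longrightarrow> absorb_prob D V p Z \<le> absorb_prob D V p W"
    and closed: "\<And>u. u \<in> V \<Longrightarrow> Z \<union> {u} \<in> Y \<and> (Z - {u} \<in> Y \<or> p Z u = 1)"
    and "b \<in> V" "0 < p Z b"
  shows "absorb_prob D V p (Z \<union> {b}) = absorb_prob D V p Z"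
proof (rule ccontr)
  let ?F = "absorb_prob D V p"
  define T where "T u = p Z u * ?F (Z \<union> {u}) + (1 - p Z u) * ?F (Z - {u})" for u
  assume "?F (Z \<union> {b}) \<noteq> ?F Z"
  then have gain: "?F Z < ?F (Z \<union> {b})" using Z_min closed[OF \<open>b \<in> V\<close>] by force
  have split: "?F Z = p Z u * ?F Z + (1 - p Z u) * ?F Z" for u
    by (simp add: algebra_simps)
  have rest: "(1 - p Z u) * ?F Z \<le> (1 - p Z u) * ?F (Z - {u})" if "u \<in> V" for u
    using Z_min closed[OF that] p_le_1[OF \<open>Z \<subseteq> V\<close> that] by (auto intro: mult_left_mono)
  have "?F Z \<le> T u" if "u \<in> V" for u
    using split[of u] rest[OF that] Z_min[of "Z \<union> {u}"] closed[OF that]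
      p_nonneg[OF \<open>Z \<subseteq> V\<close> that] mult_left_mono[of _ _ "p Z u"]
    unfolding T_def by fastforce
  moreover have "?F Z < T b"
  proof -
    have "p Z b * ?F Z < p Z b * ?F (Z \<union> {b})" using gain \<open>0 < p Z b\<close> by simp
    then show ?thesis using split[of b] rest[OF \<open>b \<in> V\<close>] unfolding T_def by linarith
  qed
  ultimately have "(\<Sum>u\<in>V. ?F Z) < (\<Sum>u\<in>V. T u)"
    using \<open>b \<in> V\<close> by (intro sum_strict_mono_ex1 finite_V) auto
  then have "?F Z < expect_step V p ?F Z"
    using card_V_pos by (simp add: expect_step_def T_def field_simps)
  then show False using absorb_prob_harmonic[of Z D, OF \<open>Z \<subseteq> V\<close> \<open>\<not> D Z\<close>] by simp
qed

lemma absorb_prob_eq_1_if_closed: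
  assumes Y: "Y \<subseteq> Pow V"
    and closed: "\<And>Z u. Z \<in> Y \<Longrightarrow> \<not> D Z \<Longrightarrow> u \<in> V \<Longrightarrow> Z \<union> {u} \<in> Y \<and> (Z - {u} \<in> Y \<or> p Z u = 1)"
    and progress: "\<And>Z. Z \<in> Y \<Longrightarrow> \<not> D Z \<Longrightarrow> \<exists>b\<in>V - Z. 0 < p Z b"
    and "X \<in> Y"
  shows "absorb_prob D V p X = 1"
proof -
  let ?F = "absorb_prob D V p"
  have "finite Y" using Y finite_V by (meson finite_Pow_iff finite_subset)
  define m where "m = Min (?F ` Y)"
  have m_le: "m \<le> ?F W" if "W \<in> Y" for W unfolding m_def using \<open>finite Y\<close> that by simp
  have "m \<in> ?F ` Y" unfolding m_def using \<open>finite Y\<close> \<open>X \<in> Y\<close> by (intro Min_in) auto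
  \<comment> \<open>Among the minimisers take one missing the fewest nodes; it must already be absorbing.\<close>
  then obtain Z where Z: "Z \<in> Y" "?F Z = m"
    and Z_least: "\<And>W. W \<in> Y \<Longrightarrow> ?F W = m \<Longrightarrow> card (V - Z) \<le> card (V - W)"
    using ex_has_least_nat[of "\<lambda>W. W \<in> Y \<and> ?F W = m" _ "\<lambda>W. card (V - W)"] by blast
  have "D Z"
  proof (rule ccontr)
    assume "\<not> D Z"
    then obtain b where b: "b \<in> V - Z" "0 < p Z b" using progress Z(1) by blast
    have "Z \<union> {b} \<in> Y" using closed Z(1) \<open>\<not> D Z\<close> b by blast
    moreover have "?F (Z \<union> {b}) = m"
      using absorb_prob_min_spreads[of Z D Y b] Z Y closed m_le b \<open>\<not> D Z\<close> by auto
    moreover have "card (V - (Z \<union> {b})) < card (V - Z)"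
      using b finite_V by (intro psubset_card_mono) auto
    ultimately show False using Z_least by fastforce
  qed
  then have "m = 1" using Z(2) absorb_prob_target by metis
  then show ?thesis using m_le[OF \<open>X \<in> Y\<close>] absorb_prob_bounds[of X D] Y \<open>X \<in> Y\<close> by force
qed

end

section \<open>Marginal gains and the greedy algorithm\<close>

definition marginal_gain_bound :: "('a set \<Rightarrow> real) \<Rightarrow> bool" where
  "marginal_gain_bound f \<longleftrightarrow>
     (\<forall>A T. finite T \<longrightarrow> f T \<le> f A + (\<Sum>s\<in>T - A. f (A \<union> {s}) - f A))"

lemma marginal_gain_boundD:
  "marginal_gain_bound f \<Longrightarrow> finite T \<Longrightarrow> f T \<le> f A + (\<Sum>s\<in>T - A. f (A \<union> {s}) - f A)"
  unfolding marginal_gain_bound_def by blast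

lemma marginal_gain_bound_mono:
  assumes "marginal_gain_bound f" "finite A" "A \<subseteq> B"
  shows "f A \<le> f B"
proof -
  have "A - B = {}" using assms(3) by blast
  then show ?thesis using marginal_gain_boundD[OF assms(1,2), of B] by (simp only:) simp
qed

lemma marginal_gain_bound_exists: "marginal_gain_bound (\<lambda>T. of_bool (\<exists>s\<in>T. P s))"
  unfolding marginal_gain_bound_def
proof (intro allI impI)
  fix A T :: "'a set"
  assume "finite T"
  let ?gain = "\<lambda>s. of_bool (\<exists>s'\<in>A \<union> {s}. P s') - of_bool (\<exists>s\<in>A. P s) :: real"
  show "of_bool (\<exists>s\<in>T. P s) \<le> of_bool (\<exists>s\<in>A. P s) + sum ?gain (T - A)"
  proof (cases "\<exists>s\<in>A. P s")
    case False
    then have gain: "?gain s = of_bool (P s)" for s by auto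
    show ?thesis
    proof (cases "\<exists>s\<in>T. P s")
      case True
      then obtain s where "s \<in> T - A" "P s" using False by blast
      then have "of_bool (P s) \<le> (\<Sum>s\<in>T - A. of_bool (P s) :: real)"
        using \<open>finite T\<close> by (intro member_le_sum) auto
      then show ?thesis using True False \<open>P s\<close> by (simp add: gain)
    qed (simp add: gain sum_nonneg)
  qed simp
qed

lemma marginal_gain_bound_sum:
  fixes f :: "'i \<Rightarrow> 'a set \<Rightarrow> real"
  assumes "\<And>i. i \<in> I \<Longrightarrow> 0 \<le> c i" "\<And>i. i \<in> I \<Longrightarrow> marginal_gain_bound (f i)"
  shows "marginal_gain_bound (\<lambda>T. \<Sum>i\<in>I. c i * f i T)"
  unfolding marginal_gain_bound_def
proof (intro allI impI)
  fix A T :: "'a set"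
  assume "finite T"
  have "(\<Sum>i\<in>I. c i * f i T) \<le> (\<Sum>i\<in>I. c i * (f i A + (\<Sum>s\<in>T - A. f i (A \<union> {s}) - f i A)))"
    using assms marginal_gain_boundD[OF _ \<open>finite T\<close>] by (intro sum_mono mult_left_mono) auto
  also have "\<dots> = (\<Sum>i\<in>I. c i * f i A) +
      (\<Sum>s\<in>T - A. (\<Sum>i\<in>I. c i * f i (A \<union> {s})) - (\<Sum>i\<in>I. c i * f i A))"
    by (simp add: algebra_simps sum.distrib sum_distrib_left sum_subtractf sum.swap[of _ "T - A"])
  finally show "(\<Sum>i\<in>I. c i * f i T) \<le> (\<Sum>i\<in>I. c i * f i A) +
      (\<Sum>s\<in>T - A. (\<Sum>i\<in>I. c i * f i (A \<union> {s})) - (\<Sum>i\<in>I. c i * f i A))" .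
qed

lemma marginal_gain_bound_LIMSEQ:
  fixes f :: "nat \<Rightarrow> 'a set \<Rightarrow> real"
  assumes lim: "\<And>T. (\<lambda>t. f t T) \<longlonglongrightarrow> g T" and bound: "\<And>t. marginal_gain_bound (f t)"
  shows "marginal_gain_bound g"
  unfolding marginal_gain_bound_def
proof (intro allI impI)
  fix A T :: "'a set"
  assume "finite T"
  show "g T \<le> g A + (\<Sum>s\<in>T - A. g (A \<union> {s}) - g A)"
  proof (rule LIMSEQ_le[OF lim])
    show "(\<lambda>t. f t A + (\<Sum>s\<in>T - A. f t (A \<union> {s}) - f t A))
        \<longlonglongrightarrow> g A + (\<Sum>s\<in>T - A. g (A \<union> {s}) - g A)"
      by (intro tendsto_intros lim)
  qed (use marginal_gain_boundD[OF bound \<open>finite T\<close>] in auto)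
qed

lemma marginal_gain_bound_le_best_gain:
  assumes f: "marginal_gain_bound f" and T: "finite T" "T \<subseteq> U" "card T \<le> k"
    and gain: "\<And>v. v \<in> U - A \<Longrightarrow> f (A \<union> {v}) - f A \<le> d" and "0 \<le> d"
  shows "f T \<le> f A + real k * d"
proof -
  have "f T \<le> f A + (\<Sum>s\<in>T - A. f (A \<union> {s}) - f A)"
    by (rule marginal_gain_boundD[OF f T(1)])
  also have "\<dots> \<le> f A + real (card (T - A)) * d"
    using gain T(2) by (intro add_left_mono sum_bounded_above) auto
  also have "\<dots> \<le> f A + real k * d"
    using card_mono[OF T(1), of "T - A"] T(3) \<open>0 \<le> d\<close> by (intro add_left_mono mult_right_mono) auto
  finally show ?thesis .
qed

text \<open>The greedy guarantee of Nemhauser, Wolsey and Fisher: each greedy step closes at least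
  a \<open>1/k\<close> fraction of the remaining gap to \<open>f T\<close>, so after \<open>k\<close> steps the gap has shrunk by
  \<open>(1 - 1/k)\<^sup>k \<le> 1/e\<close>.\<close>
lemma greedy_approximation:
  fixes f :: "'a set \<Rightarrow> real" and vs :: "'a list"
  assumes f: "marginal_gain_bound f" "0 \<le> f {}"
    and T: "finite T" "T \<subseteq> U" "card T \<le> k"
    and "0 < k" "length vs = k"
    and greedy: "\<And>i v. i < k \<Longrightarrow> v \<in> U - set (take i vs) \<Longrightarrow>
                   f (set (take i vs) \<union> {v}) \<le> f (set (take i vs) \<union> {vs ! i})"
  shows "(1 - 1 / exp 1) * f T \<le> f (set vs)"
proof -
  define gap where "gap i = f T - f (set (take i vs))" for i
  define q where "q = 1 - 1 / real k"
  have "0 \<le> q" unfolding q_def using \<open>0 < k\<close> by (simp add: field_simps)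
  have gap_Suc: "gap (Suc i) \<le> q * gap i" if "i < k" for i
  proof -
    let ?S = "set (take i vs)"
    have take_Suc: "set (take (Suc i) vs) = ?S \<union> {vs ! i}"
      using that \<open>length vs = k\<close> by (simp add: take_Suc_conv_app_nth)
    have "f T \<le> f ?S + real k * (f (set (take (Suc i) vs)) - f ?S)"
    proof (rule marginal_gain_bound_le_best_gain[OF f(1) T])
      show "f (?S \<union> {v}) - f ?S \<le> f (set (take (Suc i) vs)) - f ?S" if "v \<in> U - ?S" for v
        using greedy[OF \<open>i < k\<close> that] take_Suc by simp
      show "0 \<le> f (set (take (Suc i) vs)) - f ?S"
        using marginal_gain_bound_mono[OF f(1), of ?S] take_Suc by auto
    qed
    then have "real k * gap (Suc i) \<le> (real k - 1) * gap i"
      unfolding gap_def by (simp add: algebra_simps)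
    then show ?thesis unfolding q_def using \<open>0 < k\<close> by (simp add: field_simps)
  qed
  have gap_pow: "gap i \<le> q ^ i * gap 0" if "i \<le> k" for i
    using that
  proof (induction i)
    case (Suc i)
    then have "gap (Suc i) \<le> q * gap i" by (intro gap_Suc) simp
    also have "\<dots> \<le> q * (q ^ i * gap 0)" using Suc \<open>0 \<le> q\<close> by (intro mult_left_mono) simp_all
    finally show ?case by simp
  qed simp
  have "0 \<le> gap 0" unfolding gap_def using marginal_gain_bound_mono[OF f(1), of "{}" T] by simp
  have "q ^ k \<le> exp (- 1)"
    unfolding q_def using exp_ge_one_minus_x_over_n_power_n[of 1 k] \<open>0 < k\<close> by simp
  then have "gap k \<le> exp (- 1) * gap 0"
    using gap_pow[of k] \<open>0 \<le> gap 0\<close> by (meson mult_right_mono order_trans order_refl)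
  then show ?thesis
    using f(2) \<open>length vs = k\<close> unfolding gap_def by (simp add: exp_minus field_simps)
qed

section \<open>The positional voter model under infinite bias\<close>

lemma tendsto_of_lower_approximations:
  fixes f :: "'a \<Rightarrow> real"
  assumes upper: "eventually (\<lambda>x. f x \<le> L) F"
    and lower: "\<And>t. eventually (\<lambda>x. h t x \<le> f x) F"
    and approx: "\<And>t. (h t \<longlongrightarrow> H t) F"
    and limit: "H \<longlonglongrightarrow> L"
  shows "(f \<longlongrightarrow> L) F"
proof (rule order_tendstoI)
  fix a assume "a < L"
  then obtain t where "a < H t"
    using order_tendstoD(1)[OF limit] eventually_sequentially by (metis order_refl)
  then have "eventually (\<lambda>x. a < h t x) F" by (rule order_tendstoD(1)[OF approx])
  with lower[of t] show "eventually (\<lambda>x. a < f x) F" by eventually_elim simp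
next
  fix a assume "L < a"
  from upper show "eventually (\<lambda>x. f x < a) F"
    by eventually_elim (use \<open>L < a\<close> in linarith)
qed

lemma rtrancl_crosses_boundary:
  assumes "(x, y) \<in> R\<^sup>*" "x \<in> Z" "y \<notin> Z"
  shows "\<exists>a b. (a, b) \<in> R \<and> a \<in> Z \<and> b \<notin> Z"
  using assms by (induction rule: rtrancl_induct) auto

locale voter_graph =
  fixes V :: "'v set" and E :: "('v \<times> 'v) set"
  assumes finite_V: "finite V" and V_nonempty: "V \<noteq> {}" and E_subset: "E \<subseteq> V \<times> V"
    and self_loops: "\<forall>u\<in>V. (u, u) \<in> E"
    and connected: "\<forall>u\<in>V. \<forall>v\<in>V. (u, v) \<in> E\<^sup>*"
begin

abbreviation N :: "'v \<Rightarrow> 'v set" where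
  "N u \<equiv> in_nbrs E V u"

abbreviation copy_prob :: "'v set \<Rightarrow> real \<Rightarrow> 'v set \<Rightarrow> 'v \<Rightarrow> real" where
  "copy_prob S \<delta> \<equiv> copyA_prob V E (\<lambda>_ _. 1) S \<delta>"

lemma finite_N: "finite (N u)"
  unfolding in_nbrs_def using finite_V by auto

lemma self_in_N: "u \<in> V \<Longrightarrow> u \<in> N u"
  unfolding in_nbrs_def using self_loops by auto

lemma card_N_pos: "u \<in> V \<Longrightarrow> 0 < card (N u)"
  using finite_N self_in_N card_gt_0_iff by blast

definition neutral_prob :: "'v set \<Rightarrow> 'v \<Rightarrow> real" where
  "neutral_prob X u = real (card (N u \<inter> X)) / real (card (N u))"

definition copy_prob_inf :: "'v set \<Rightarrow> 'v set \<Rightarrow> 'v \<Rightarrow> real" where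
  "copy_prob_inf S X u = (if u \<in> S \<and> N u \<inter> X \<noteq> {} then 1 else neutral_prob X u)"

lemma neutral_prob_bounds: "0 \<le> neutral_prob X u \<and> neutral_prob X u \<le> 1"
  unfolding neutral_prob_def using finite_N
  by (auto simp: divide_le_eq_1 card_mono)

lemma neutral_prob_mono: "X \<subseteq> Y \<Longrightarrow> neutral_prob X u \<le> neutral_prob Y u"
  unfolding neutral_prob_def using finite_N
  by (auto intro!: divide_right_mono card_mono)

lemma copy_prob_inf_mono: "X \<subseteq> Y \<Longrightarrow> copy_prob_inf S X u \<le> copy_prob_inf S Y u"
  unfolding copy_prob_inf_def using neutral_prob_mono neutral_prob_bounds by fastforce

lemma copy_prob_inf_pos: "u \<in> V \<Longrightarrow> N u \<inter> X \<noteq> {} \<Longrightarrow> 0 < copy_prob_inf S X u"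
  unfolding copy_prob_inf_def neutral_prob_def
  using finite_N card_N_pos by (simp add: card_gt_0_iff)

lemma copy_chain_inf: "copy_chain V (copy_prob_inf S)"
  by unfold_locales (use finite_V V_nonempty neutral_prob_bounds in \<open>auto simp: copy_prob_inf_def\<close>)

lemma copy_prob_unbiased: "u \<notin> S \<Longrightarrow> copy_prob S \<delta> X u = neutral_prob X u"
  unfolding copyA_prob_def fitness_def neutral_prob_def by simp

lemma copy_prob_biased:
  assumes "u \<in> S"
  shows "copy_prob S \<delta> X u = (1 + \<delta>) * real (card (N u \<inter> X)) /
           ((1 + \<delta>) * real (card (N u \<inter> X)) + real (card (N u - X)))"
proof -
  have "(\<Sum>x\<in>N u. fitness S \<delta> X x u * 1) = (\<Sum>x\<in>N u \<inter> X. 1 + \<delta>) + (\<Sum>x\<in>N u - X. 1)"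
    unfolding fitness_def using assms finite_N by (simp add: sum.If_cases Diff_eq)
  moreover have "(\<Sum>v\<in>N u \<inter> X. fitness S \<delta> X v u * 1) = (\<Sum>x\<in>N u \<inter> X. 1 + \<delta>)"
    unfolding fitness_def using assms by simp
  ultimately show ?thesis unfolding copyA_prob_def by (simp add: mult.commute)
qed

lemma copy_prob_bounds:
  assumes "0 \<le> \<delta>"
  shows "0 \<le> copy_prob S \<delta> X u \<and> copy_prob S \<delta> X u \<le> copy_prob_inf S X u"
proof (cases "u \<in> S \<and> N u \<inter> X \<noteq> {}")
  case True
  then have "0 < real (card (N u \<inter> X))" using finite_N by (simp add: card_gt_0_iff)
  then have "0 < (1 + \<delta>) * real (card (N u \<inter> X))" using assms by simp
  then show ?thesis using True assms
    by (simp add: copy_prob_biased copy_prob_inf_def divide_le_eq_1)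
next
  case False
  then have "copy_prob S \<delta> X u = neutral_prob X u"
    by (cases "u \<in> S") (simp_all add: copy_prob_biased copy_prob_unbiased neutral_prob_def)
  then show ?thesis using False neutral_prob_bounds by (simp add: copy_prob_inf_def)
qed

lemma copy_chain_copy_prob:
  assumes "0 \<le> \<delta>"
  shows "copy_chain V (copy_prob S \<delta>)"
proof
  fix X u assume "X \<subseteq> V" "u \<in> V"
  show "0 \<le> copy_prob S \<delta> X u" using copy_prob_bounds[OF assms] by blast
  show "copy_prob S \<delta> X u \<le> 1"
    using copy_prob_bounds[OF assms, of S X u] copy_chain.p_le_1[OF copy_chain_inf[of S] \<open>X \<subseteq> V\<close> \<open>u \<in> V\<close>]
    by linarith
qed (use finite_V V_nonempty in auto)

lemma tendsto_copy_prob: "((\<lambda>\<delta>. copy_prob S \<delta> X u) \<longlongrightarrow> copy_prob_inf S X u) at_top"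
proof (cases "u \<in> S \<and> N u \<inter> X \<noteq> {}")
  case True
  define a where "a = real (card (N u \<inter> X))"
  define b where "b = real (card (N u - X))"
  have "0 < a" using True finite_N unfolding a_def by (simp add: card_gt_0_iff)
  have "filterlim (\<lambda>\<delta>. (a + b) + a * \<delta>) at_top at_top"
    by (intro filterlim_tendsto_add_at_top[OF tendsto_const]
        filterlim_tendsto_pos_mult_at_top[OF tendsto_const \<open>0 < a\<close> filterlim_ident])
  then have "filterlim (\<lambda>\<delta>. (1 + \<delta>) * a + b) at_top at_top"
    by (simp add: algebra_simps)
  then have "((\<lambda>\<delta>. 1 - b / ((1 + \<delta>) * a + b)) \<longlongrightarrow> 1 - 0) at_top"
    by (intro tendsto_intros tendsto_divide_0[OF tendsto_const] filterlim_at_top_imp_at_infinity)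
  moreover have "eventually (\<lambda>\<delta>. 1 - b / ((1 + \<delta>) * a + b) = copy_prob S \<delta> X u) at_top"
    using eventually_ge_at_top[of 0]
  proof eventually_elim
    case (elim \<delta>)
    have "0 < (1 + \<delta>) * a + b" using \<open>0 < a\<close> elim unfolding b_def by (simp add: add_pos_nonneg)
    then show ?case using True by (simp add: copy_prob_biased a_def[symmetric] b_def[symmetric] field_simps)
  qed
  ultimately show ?thesis using True by (simp add: copy_prob_inf_def tendsto_cong)
next
  case False
  then have "copy_prob S \<delta> X u = copy_prob_inf S X u" for \<delta>
    by (cases "u \<in> S") (simp_all add: copy_prob_biased copy_prob_unbiased copy_prob_inf_def neutral_prob_def)
  then show ?thesis by simp
qed

lemma fp_from_eq_absorb_prob:
  "fp_from V E w S \<delta> X = absorb_prob (\<lambda>X. X = V) V (copyA_prob V E w S \<delta>) X"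
proof -
  have "reach_within V E w S \<delta> t X = absorb_within (\<lambda>X. X = V) V (copyA_prob V E w S \<delta>) t X" for t
  proof (induction t arbitrary: X)
    case (Suc t)
    then show ?case unfolding reach_within.simps absorb_within.simps expect_step_def by simp
  qed simp
  then show ?thesis unfolding fp_from_def absorb_prob_def by simp
qed

lemma absorb_within_inf_mono_config:
  "X \<subseteq> Y \<Longrightarrow> Y \<subseteq> V \<Longrightarrow> absorb_within (\<lambda>X. X = V) V (copy_prob_inf S) t X
      \<le> absorb_within (\<lambda>X. X = V) V (copy_prob_inf S) t Y"
  by (intro copy_chain.absorb_within_mono_config[OF copy_chain_inf] copy_prob_inf_mono) auto

lemma absorb_prob_copy_prob_le_inf:
  assumes "0 \<le> \<delta>" "X \<subseteq> V"
  shows "absorb_prob (\<lambda>X. X = V) V (copy_prob S \<delta>) X \<le> absorb_prob (\<lambda>X. X = V) V (copy_prob_inf S) X"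
  by (rule copy_chain.absorb_prob_le_dominating[OF copy_chain_copy_prob[OF assms(1)] copy_chain_inf
        _ absorb_within_inf_mono_config assms(2)])
    (use copy_prob_bounds[OF assms(1)] in blast)

lemma fp_inf_eq_mean_absorb_prob:
  "fp_inf V E (\<lambda>_ _. 1) S =
     (1 / real (card V)) * (\<Sum>x\<in>V. absorb_prob (\<lambda>X. X = V) V (copy_prob_inf S) {x})"
proof -
  let ?mean = "\<lambda>h. (1 / real (card V)) * (\<Sum>x\<in>V. h {x})"
  let ?within = "\<lambda>p t. ?mean (absorb_within (\<lambda>X. X = V) V p t)"
  have fp_eq: "fp V E (\<lambda>_ _. 1) S \<delta> = ?mean (absorb_prob (\<lambda>X. X = V) V (copy_prob S \<delta>))" for \<delta>
    unfolding fp_def fp_from_eq_absorb_prob ..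
  have "((\<lambda>\<delta>. fp V E (\<lambda>_ _. 1) S \<delta>) \<longlongrightarrow> ?mean (absorb_prob (\<lambda>X. X = V) V (copy_prob_inf S))) at_top"
  proof (rule tendsto_of_lower_approximations)
    show "eventually (\<lambda>\<delta>. fp V E (\<lambda>_ _. 1) S \<delta> \<le> ?mean (absorb_prob (\<lambda>X. X = V) V (copy_prob_inf S))) at_top"
      using eventually_ge_at_top[of 0]
    proof eventually_elim
      case (elim \<delta>)
      show ?case unfolding fp_eq
        using absorb_prob_copy_prob_le_inf[OF elim] by (intro mult_left_mono sum_mono) auto
    qed
    show "eventually (\<lambda>\<delta>. ?within (copy_prob S \<delta>) t \<le> fp V E (\<lambda>_ _. 1) S \<delta>) at_top" for t
      using eventually_ge_at_top[of 0]
    proof eventually_elim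
      case (elim \<delta>)
      show ?case unfolding fp_eq
        using copy_chain.absorb_within_le_absorb_prob[OF copy_chain_copy_prob[OF elim], of "{_}"]
        by (intro mult_left_mono sum_mono) auto
    qed
    show "((\<lambda>\<delta>. ?within (copy_prob S \<delta>) t) \<longlongrightarrow> ?within (copy_prob_inf S) t) at_top" for t
      by (intro tendsto_intros tendsto_absorb_within[OF tendsto_copy_prob])
    show "(\<lambda>t. ?within (copy_prob_inf S) t) \<longlonglongrightarrow> ?mean (absorb_prob (\<lambda>X. X = V) V (copy_prob_inf S))"
      by (intro tendsto_intros copy_chain.absorb_within_LIMSEQ[OF copy_chain_inf]) auto
  qed
  then show ?thesis unfolding fp_inf_def by (rule tendsto_Lim[rotated]) simp
qed

lemma fixation_certain_after_hit:
  assumes "X \<subseteq> V" "X \<inter> S \<noteq> {}"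
  shows "absorb_prob (\<lambda>X. X = V) V (copy_prob_inf S) X = 1"
proof (rule copy_chain.absorb_prob_eq_1_if_closed[OF copy_chain_inf])
  let ?Y = "{Z. Z \<subseteq> V \<and> Z \<inter> S \<noteq> {}}"
  show "X \<in> ?Y" "?Y \<subseteq> Pow V" using assms by auto
  show "Z \<union> {u} \<in> ?Y \<and> (Z - {u} \<in> ?Y \<or> copy_prob_inf S Z u = 1)"
    if "Z \<in> ?Y" and u: "u \<in> V" for Z u
  proof -
    have Z: "Z \<subseteq> V" "Z \<inter> S \<noteq> {}" using that(1) by auto
    show ?thesis
    proof (cases "(Z - {u}) \<inter> S = {}")
      case True
      \<comment> \<open>\<open>u\<close> is the last biased \<open>A\<close>-node; its self-loop makes it keep trait \<open>A\<close>\<close>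
      then have "u \<in> S" "u \<in> N u \<inter> Z" using Z self_in_N[OF u] by auto
      then have "copy_prob_inf S Z u = 1" unfolding copy_prob_inf_def by auto
      then show ?thesis using Z u by blast
    next
      case False
      then show ?thesis using Z u by blast
    qed
  qed
  show "\<exists>b\<in>V - Z. 0 < copy_prob_inf S Z b" if Z: "Z \<in> ?Y" "Z \<noteq> V" for Z
  proof -
    have "Z \<subseteq> V" "Z \<inter> S \<noteq> {}" using Z(1) by auto
    then obtain x where x: "x \<in> Z" "x \<in> V" by blast
    have "V - Z \<noteq> {}" using \<open>Z \<subseteq> V\<close> Z(2) by auto
    then obtain y where y: "y \<notin> Z" "y \<in> V" by blast
    have "(x, y) \<in> E\<^sup>*" using connected x(2) y(2) by simp
    then obtain a b where "(a, b) \<in> E" "a \<in> Z" "b \<notin> Z"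
      using rtrancl_crosses_boundary x(1) y(1) by metis
    then have "b \<in> V - Z" "a \<in> N b \<inter> Z" using E_subset by (auto simp: in_nbrs_def)
    then show ?thesis using copy_prob_inf_pos[of b Z S] by blast
  qed
qed

section \<open>Meeting the biased set as a coverage event\<close>

fun voter_step :: "'v set \<Rightarrow> 'v \<times> 'v \<Rightarrow> 'v set" where
  "voter_step X (u, v) = (if v \<in> X then insert u X else X - {u})"

text \<open>A biased \<open>u\<close> with an \<open>A\<close>-neighbour does not
  copy neutrally, but then \<open>S\<close> is met anyway; so up to meeting \<open>S\<close> the trajectory does not
  depend on \<open>S\<close>.\<close>
fun hits :: "'v set \<Rightarrow> ('v \<times> 'v) list \<Rightarrow> 'v set \<Rightarrow> bool" where
  "hits S [] X \<longleftrightarrow> X \<inter> S \<noteq> {}"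
| "hits S ((u, v) # w) X \<longleftrightarrow>
     X \<inter> S \<noteq> {} \<or> (u \<in> S \<and> N u \<inter> X \<noteq> {}) \<or> hits S w (voter_step X (u, v))"

lemma hits_iff_hits_singleton: "hits S w X \<longleftrightarrow> (\<exists>s\<in>S. hits {s} w X)"
proof (induction w arbitrary: X)
  case (Cons e w)
  obtain u v where "e = (u, v)" by fastforce
  then show ?case using Cons.IH[of "voter_step X (u, v)"] by auto
qed auto

definition update_seqs :: "nat \<Rightarrow> ('v \<times> 'v) list set" where
  "update_seqs t = {w. length w = t \<and> set w \<subseteq> Sigma V N}"

definition seq_weight :: "('v \<times> 'v) list \<Rightarrow> real" where
  "seq_weight w = prod_list (map (\<lambda>(u, v). 1 / (real (card V) * real (card (N u)))) w)"

definition coverage :: "'v set \<Rightarrow> nat \<Rightarrow> 'v set \<Rightarrow> real" where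
  "coverage S t X = (\<Sum>w\<in>update_seqs t. seq_weight w * of_bool (hits S w X))"

lemma update_seqs_0: "update_seqs 0 = {[]}"
  unfolding update_seqs_def by auto

lemma update_seqs_Suc: "update_seqs (Suc t) = (\<lambda>(e, w). e # w) ` (Sigma V N \<times> update_seqs t)"
  unfolding update_seqs_def by (auto simp: length_Suc_conv)

lemma sum_update_seqs_Suc:
  "(\<Sum>w\<in>update_seqs (Suc t). g w) = (\<Sum>u\<in>V. \<Sum>v\<in>N u. \<Sum>w\<in>update_seqs t. g ((u, v) # w))"
proof -
  have "inj_on (\<lambda>(e, w). e # w) (Sigma V N \<times> update_seqs t)" by (auto simp: inj_on_def)
  then have "(\<Sum>w\<in>update_seqs (Suc t). g w) = (\<Sum>(e, w)\<in>Sigma V N \<times> update_seqs t. g (e # w))"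
    unfolding update_seqs_Suc by (subst sum.reindex) (simp_all add: case_prod_beta)
  also have "\<dots> = (\<Sum>e\<in>Sigma V N. \<Sum>w\<in>update_seqs t. g (e # w))"
    by (rule sum.cartesian_product[symmetric])
  also have "\<dots> = (\<Sum>(u, v)\<in>Sigma V N. \<Sum>w\<in>update_seqs t. g ((u, v) # w))"
    by (simp add: case_prod_beta)
  also have "\<dots> = (\<Sum>u\<in>V. \<Sum>v\<in>N u. \<Sum>w\<in>update_seqs t. g ((u, v) # w))"
    using finite_V finite_N by (subst sum.Sigma) auto
  finally show ?thesis .
qed

lemma seq_weight_Cons: "seq_weight ((u, v) # w) = seq_weight w / (real (card V) * real (card (N u)))"
  unfolding seq_weight_def by simp

lemma seq_weight_nonneg: "0 \<le> seq_weight w"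
  unfolding seq_weight_def by (induction w) auto

lemma sum_seq_weight: "(\<Sum>w\<in>update_seqs t. seq_weight w) = 1"
proof (induction t)
  case (Suc t)
  have "(\<Sum>w\<in>update_seqs (Suc t). seq_weight w) = (\<Sum>u\<in>V. \<Sum>v\<in>N u. 1 / (real (card V) * real (card (N u))))"
    unfolding sum_update_seqs_Suc seq_weight_Cons by (simp add: sum_divide_distrib[symmetric] Suc)
  also have "\<dots> = (\<Sum>u\<in>V. 1 / real (card V))"
    using card_N_pos by (intro sum.cong) auto
  also have "\<dots> = 1" using finite_V V_nonempty by simp
  finally show ?case .
qed (simp add: update_seqs_0 seq_weight_def)

lemma coverage_target: "X \<inter> S \<noteq> {} \<Longrightarrow> coverage S t X = 1"
proof -
  assume "X \<inter> S \<noteq> {}"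
  then have "hits S w X" for w by (cases w) auto
  then show ?thesis unfolding coverage_def using sum_seq_weight by simp
qed

lemma coverage_Suc:
  assumes "X \<inter> S = {}"
  shows "coverage S (Suc t) X = (1 / real (card V)) * (\<Sum>u\<in>V.
      (\<Sum>v\<in>N u. if u \<in> S \<and> N u \<inter> X \<noteq> {} then 1 else coverage S t (voter_step X (u, v)))
        / real (card (N u)))"
proof -
  have "(\<Sum>w\<in>update_seqs t. seq_weight ((u, v) # w) * of_bool (hits S ((u, v) # w) X)) =
      (if u \<in> S \<and> N u \<inter> X \<noteq> {} then 1 else coverage S t (voter_step X (u, v)))
        / (real (card V) * real (card (N u)))" for u v
    using assms unfolding coverage_def seq_weight_Cons
    by (auto simp: sum_divide_distrib[symmetric] sum_seq_weight)
  then show ?thesis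
    unfolding coverage_def[of S "Suc t"] sum_update_seqs_Suc
    by (simp add: sum_divide_distrib[symmetric] sum_distrib_left)
qed

lemma mean_over_nbrs_voter_step:
  assumes "u \<in> V"
  shows "(\<Sum>v\<in>N u. h (voter_step X (u, v))) / real (card (N u)) =
    neutral_prob X u * h (insert u X) + (1 - neutral_prob X u) * h (X - {u})"
proof -
  have "(\<Sum>v\<in>N u. h (voter_step X (u, v))) =
      (\<Sum>v\<in>N u. if v \<in> X then h (insert u X) else h (X - {u}))"
    by (intro sum.cong) auto
  also have "\<dots> = (\<Sum>v\<in>N u \<inter> X. h (insert u X)) + (\<Sum>v\<in>N u - X. h (X - {u}))"
    using finite_N by (simp add: sum.If_cases Diff_eq)
  finally have sum_eq: "(\<Sum>v\<in>N u. h (voter_step X (u, v))) =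
      real (card (N u \<inter> X)) * h (insert u X) + real (card (N u - X)) * h (X - {u})"
    by simp
  have "real (card (N u \<inter> X)) + real (card (N u - X)) = real (card (N u))"
    using card_Int_Diff[OF finite_N, of u X] by simp
  then have "1 - neutral_prob X u = real (card (N u - X)) / real (card (N u))"
    using card_N_pos[OF assms] unfolding neutral_prob_def by (simp add: field_simps)
  then show ?thesis
    unfolding sum_eq by (simp add: neutral_prob_def add_divide_distrib)
qed

lemma absorb_within_eq_coverage:
  "X \<subseteq> V \<Longrightarrow> absorb_within (\<lambda>X. X \<inter> S \<noteq> {}) V (copy_prob_inf S) t X = coverage S t X"
proof (induction t arbitrary: X)
  case 0
  then show ?case by (simp add: coverage_def update_seqs_0 seq_weight_def)
next
  case (Suc t)
  show ?case
  proof (cases "X \<inter> S = {}")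
    case True
    have step: "(\<Sum>v\<in>N u. if u \<in> S \<and> N u \<inter> X \<noteq> {} then 1 else coverage S t (voter_step X (u, v)))
        / real (card (N u)) =
      copy_prob_inf S X u * coverage S t (X \<union> {u}) + (1 - copy_prob_inf S X u) * coverage S t (X - {u})"
      if "u \<in> V" for u
    proof (cases "u \<in> S \<and> N u \<inter> X \<noteq> {}")
      case True
      then show ?thesis using card_N_pos[OF that] by (simp add: coverage_target copy_prob_inf_def)
    next
      case False
      then show ?thesis
        using mean_over_nbrs_voter_step[OF that, of "coverage S t" X]
        by (simp only: if_not_P[OF False] copy_prob_inf_def) simp
    qed
    have "absorb_within (\<lambda>X. X \<inter> S \<noteq> {}) V (copy_prob_inf S) (Suc t) X =
        expect_step V (copy_prob_inf S) (absorb_within (\<lambda>X. X \<inter> S \<noteq> {}) V (copy_prob_inf S) t) X"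
      using True by simp
    also have "\<dots> = expect_step V (copy_prob_inf S) (coverage S t) X"
      by (rule expect_step_cong[OF Suc.IH Suc.prems])
    also have "\<dots> = coverage S (Suc t) X"
      unfolding coverage_Suc[OF True] expect_step_def using step by simp
    finally show ?thesis .
  qed (simp add: absorb_within_target coverage_target)
qed

text \<open>Agrees with \<open>fp_inf\<close> on nonempty \<open>S \<subseteq> V\<close>, but \<open>fp_hit {} = 0\<close>, whereas \<open>fp_inf {}\<close> is the
  neutral fixation probability.\<close>
definition fp_hit :: "'v set \<Rightarrow> real" where
  "fp_hit S = (1 / real (card V)) * (\<Sum>x\<in>V. absorb_prob (\<lambda>X. X \<inter> S \<noteq> {}) V (copy_prob_inf S) {x})"

lemma fp_inf_eq_fp_hit:
  assumes "S \<subseteq> V" "S \<noteq> {}"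
  shows "fp_inf V E (\<lambda>_ _. 1) S = fp_hit S"
proof -
  have "absorb_prob (\<lambda>X. X \<inter> S \<noteq> {}) V (copy_prob_inf S) X =
      absorb_prob (\<lambda>X. X = V) V (copy_prob_inf S) X" if "X \<subseteq> V" for X
    by (rule copy_chain.absorb_prob_eq_if_absorbing[OF copy_chain_inf])
      (use assms that fixation_certain_after_hit in auto)
  then show ?thesis unfolding fp_inf_eq_mean_absorb_prob fp_hit_def
    by (intro arg_cong[where f = "(*) _"] sum.cong) auto
qed

lemma LIMSEQ_fp_hit: "(\<lambda>t. (1 / real (card V)) * (\<Sum>x\<in>V. coverage S t {x})) \<longlonglongrightarrow> fp_hit S"
proof -
  have "(\<lambda>t. coverage S t {x}) \<longlonglongrightarrow> absorb_prob (\<lambda>X. X \<inter> S \<noteq> {}) V (copy_prob_inf S) {x}"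
    if "x \<in> V" for x
  proof -
    have "absorb_within (\<lambda>X. X \<inter> S \<noteq> {}) V (copy_prob_inf S) t {x} = coverage S t {x}" for t
      using that by (intro absorb_within_eq_coverage) auto
    then show ?thesis
      using copy_chain.absorb_within_LIMSEQ[OF copy_chain_inf[of S], of "{x}" "\<lambda>X. X \<inter> S \<noteq> {}"] that
      by simp
  qed
  then show ?thesis unfolding fp_hit_def by (intro tendsto_intros)
qed

lemma fp_hit_empty: "fp_hit {} = 0"
  using LIMSEQ_fp_hit[of "{}"]
  by (simp add: coverage_def hits_iff_hits_singleton[of "{}"] LIMSEQ_const_iff)

lemma marginal_gain_bound_fp_hit: "marginal_gain_bound fp_hit"
proof (rule marginal_gain_bound_LIMSEQ[OF LIMSEQ_fp_hit])
  fix t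
  have "(1 / real (card V)) * (\<Sum>x\<in>V. coverage S t {x}) = (\<Sum>x\<in>V. 1 / real (card V) *
      (\<Sum>w\<in>update_seqs t. seq_weight w * of_bool (\<exists>s\<in>S. hits {s} w {x})))" for S
    unfolding coverage_def sum_distrib_left hits_iff_hits_singleton[of S] ..
  then show "marginal_gain_bound (\<lambda>S. (1 / real (card V)) * (\<Sum>x\<in>V. coverage S t {x}))"
    by (simp only:) (intro marginal_gain_bound_sum marginal_gain_bound_exists seq_weight_nonneg; simp)
qed

end

theorem theorem4:
  fixes V :: "'v set" and E :: "('v \<times> 'v) set" and k :: nat
    and Sstar :: "'v set" and vs :: "'v list"
  assumes finV: "finite V"
    and E_sub: "E \<subseteq> V \<times> V"
    and undirected: "sym E"
    and self_loops: "\<forall>u\<in>V. (u, u) \<in> E"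
    and connected: "\<forall>u\<in>V. \<forall>v\<in>V. (u, v) \<in> E\<^sup>*"
    and k_pos: "0 < k" and k_le: "k \<le> card V"
    and Sstar_sub: "Sstar \<subseteq> V" and Sstar_card: "card Sstar = k"
    and Sstar_opt: "\<forall>S. S \<subseteq> V \<and> card S = k \<longrightarrow>
                      fp_inf V E (\<lambda>_ _. 1) S \<le> fp_inf V E (\<lambda>_ _. 1) Sstar"
    and vs_len: "length vs = k"
    and greedy: "\<forall>i<k. vs ! i \<in> V - set (take i vs) \<and>
                   (\<forall>v\<in>V - set (take i vs).
                      fp_inf V E (\<lambda>_ _. 1) (set (take i vs) \<union> {v})
                      \<le> fp_inf V E (\<lambda>_ _. 1) (set (take i vs) \<union> {vs ! i}))"
  shows "fp_inf V E (\<lambda>_ _. 1) (set vs) \<ge> (1 - 1 / exp 1) * fp_inf V E (\<lambda>_ _. 1) Sstar"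
proof -
  \<comment> \<open>The bound holds against every \<open>k\<close>-set.\<close>
  have "V \<noteq> {}" using k_pos k_le by auto
  interpret voter_graph V E
    using finV \<open>V \<noteq> {}\<close> E_sub self_loops connected by unfold_locales
  have vs_V: "set vs \<subseteq> V" using greedy vs_len by (auto simp: in_set_conv_nth)
  have "(1 - 1 / exp 1) * fp_hit Sstar \<le> fp_hit (set vs)"
  proof (rule greedy_approximation[OF marginal_gain_bound_fp_hit _ _ Sstar_sub _ k_pos vs_len])
    fix i v assume "i < k" "v \<in> V - set (take i vs)"
    moreover have "set (take i vs) \<subseteq> V" using vs_V set_take_subset by fastforce
    moreover have "vs ! i \<in> V" using greedy \<open>i < k\<close> by blast
    ultimately show "fp_hit (set (take i vs) \<union> {v}) \<le> fp_hit (set (take i vs) \<union> {vs ! i})"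
      using greedy by (simp add: fp_inf_eq_fp_hit[symmetric])
  qed (use fp_hit_empty finV Sstar_sub finite_subset Sstar_card in auto)
  moreover have "set vs \<noteq> {}" "Sstar \<noteq> {}" using vs_len Sstar_card k_pos by auto
  ultimately show ?thesis using vs_V Sstar_sub by (simp add: fp_inf_eq_fp_hit)
qed

end
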